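(* For every $t=0,1,\dots,T-1$: (a) the functions $H_t$ and $V_t$ are sub-$K_t$-convex; (b) $H_t(S_t)\le \inf_{z_j\in Z_\theta} H_t(z_j)$.
   Context: Model. Fix an integer horizon $T\ge 2$, a discount factor $\alpha\in(0,1]$, and for $t=0,\dots,T-1$: unit ordering costs $c_t\in\mathbb R$, a salvage coefficient $c_T\in\mathbb R$, setup costs $K_t\ge 0$, functions $G_t:\mathbb R\to\mathbb R$ (expected one-period holding/penalty cost), and independent nonnegative random demands $D_0,\dots,D_{T-1}$ with right-continuous distribution functions $F_t$ and finite means; all expectations appearing are assumed finite. Put $C_t(y)=(c_t-\alpha c_{t+1})y+G_t(y)+\alpha c_{t+1}E[D_t]$. Standing assumptions: (i) each $C_t$ is convex with $C_t(y)\to+\infty$ as $|y|\to\infty$; (ii) $K_t\ge \alpha K_{t+1}$ for $t=0,\dots,T-2$. Grid construction. Fix $\theta>0$, let $z_m=m\theta$ ($m\in\mathbb Z$), $Z_\theta=\{z_m:m\in\mathbb Z\}$, and $f_t(n)=F_t(z_{n+1})-F_t(z_n)$ for integers $n\ge -1$. Let $C^m_t=\min\{y: C_t(y)=\min_{x\in\mathbb R}C_t(x)\}$; with $n_0$ the integer such that $z_{n_0}<C^m_t\le z_{n_0+1}$, let $S^U_t=\min\{z_m\in Z_\theta: z_m\ge C^m_t,\ C_t(z_m)>C_t(z_{n_0})+K_t\}$. Let $s_{T-1}$ be a point with $s_{T-1}\le C^m_{T-1}$ and $C_{T-1}(s_{T-1})=C_{T-1}(C^m_{T-1})+K_{T-1}$,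 and set $\bar I_{T-1}=s_{T-1}$. For $t=T-2,\dots,0$ (backwards) set $I_t=\max\{z_m\in Z_\theta: z_m<\min(\bar I_{t+1}-\theta,\,C^m_t)\}$ and $\bar I_t=\max\{z_m\in Z_\theta: z_m\le I_t,\ C_t(z_m)>C_t(I_t)+K_t\}+\theta$. Set $H_{T-1}=C_{T-1}$, $S_{T-1}=C^m_{T-1}$. Whenever $H_t,S_t,s_t$ are defined, let $V_t(y)=H_t(S_t)+K_t$ for $y<s_t$ and $V_t(y)=H_t(y)$ for $y\ge s_t$. For $t=T-2,\dots,0$ (backwards): $H_t(y)=C_t(y)+\alpha\sum_{n=-1}^{\infty}V_{t+1}(y-z_n)f_t(n)$; $S_t=\max\{z_m\in Z_\theta: I_t\le z_m\le S^U_t,\ H_t(z_m)=\min\{H_t(z_n): z_n\in Z_\theta,\ I_t\le z_n\le S^U_t\}\}$; $s_t=S_t$ if $K_t=0$, and if $K_t>0$, $s_t=\min\{z_m\in Z_\theta:\bar I_t\le z_m\le S_t,\ H_t(z_m)\le H_t(S_t)+K_t\}$. Sub-$K$-convexity. For $K\ge 0$, a function $g:\mathbb R\to\mathbb R$ is sub-$K$-convex if for all $x\le y\le z_m$ with $x,y\in\mathbb R$, $z_m\in Z_\theta$, and $y=\tau x+(1-\tau)z_m$, $\tau\in[0,1]$, one has $g(y)\le \tau g(x)+(1-\tau)(g(z_m)+K)$. *)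

theory Defs
  imports "HOL-Probability.Probability"
begin

definition zg :: "real \<Rightarrow> int \<Rightarrow> real" where
  "zg \<theta> m = real_of_int m * \<theta>"

text \<open>C_t(y) = (c_t - alpha c_{t+1}) y + G_t(y) + alpha c_{t+1} E[D_t]; the demand D_t is
  given by its distribution, a probability measure on the Borel sets of the reals.\<close>
definition Ccost :: "real \<Rightarrow> (nat \<Rightarrow> real) \<Rightarrow> (nat \<Rightarrow> real \<Rightarrow> real) \<Rightarrow> (nat \<Rightarrow> real measure)
    \<Rightarrow> nat \<Rightarrow> real \<Rightarrow> real" where
  "Ccost \<alpha> c G D t y = (c t - \<alpha> * c (Suc t)) * y + G t y + \<alpha> * c (Suc t) * (\<integral>x. x \<partial>(D t))"

definition Fdist :: "(nat \<Rightarrow> real measure) \<Rightarrow> nat \<Rightarrow> real \<Rightarrow> real" where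
  "Fdist D t x = measure (D t) {..x}"

definition fmass :: "real \<Rightarrow> (nat \<Rightarrow> real measure) \<Rightarrow> nat \<Rightarrow> int \<Rightarrow> real" where
  "fmass \<theta> D t n = Fdist D t (zg \<theta> (n + 1)) - Fdist D t (zg \<theta> n)"

definition Cmin :: "(nat \<Rightarrow> real \<Rightarrow> real) \<Rightarrow> nat \<Rightarrow> real" where
  "Cmin C t = (LEAST y. \<forall>x. C t y \<le> C t x)"

definition n0 :: "(nat \<Rightarrow> real \<Rightarrow> real) \<Rightarrow> real \<Rightarrow> nat \<Rightarrow> int" where
  "n0 C \<theta> t = (THE n::int. zg \<theta> n < Cmin C t \<and> Cmin C t \<le> zg \<theta> (n + 1))"

definition SU :: "(nat \<Rightarrow> real \<Rightarrow> real) \<Rightarrow> (nat \<Rightarrow> real) \<Rightarrow> real \<Rightarrow> nat \<Rightarrow> real" where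
  "SU C K \<theta> t = zg \<theta> (LEAST m::int. zg \<theta> m \<ge> Cmin C t \<and>
      C t (zg \<theta> m) > C t (zg \<theta> (n0 C \<theta> t)) + K t)"

definition sLast :: "(nat \<Rightarrow> real \<Rightarrow> real) \<Rightarrow> (nat \<Rightarrow> real) \<Rightarrow> nat \<Rightarrow> real" where
  "sLast C K T = (THE s. s \<le> Cmin C (T - 1) \<and>
      C (T - 1) s = C (T - 1) (Cmin C (T - 1)) + K (T - 1))"

definition Inext :: "(nat \<Rightarrow> real \<Rightarrow> real) \<Rightarrow> real \<Rightarrow> nat \<Rightarrow> real \<Rightarrow> real" where
  "Inext C \<theta> t Ibar1 = zg \<theta> (GREATEST m::int. zg \<theta> m < min (Ibar1 - \<theta>) (Cmin C t))"

definition Ibarnext :: "(nat \<Rightarrow> real \<Rightarrow> real) \<Rightarrow> (nat \<Rightarrow> real) \<Rightarrow> real \<Rightarrow> nat \<Rightarrow> real \<Rightarrow> real" where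
  "Ibarnext C K \<theta> t It = zg \<theta> (GREATEST m::int. zg \<theta> m \<le> It \<and> C t (zg \<theta> m) > C t It + K t) + \<theta>"

primrec IbarA :: "(nat \<Rightarrow> real \<Rightarrow> real) \<Rightarrow> (nat \<Rightarrow> real) \<Rightarrow> real \<Rightarrow> nat \<Rightarrow> nat \<Rightarrow> real" where
  "IbarA C K \<theta> T 0 = sLast C K T"
| "IbarA C K \<theta> T (Suc k) =
     Ibarnext C K \<theta> (T - 2 - k) (Inext C \<theta> (T - 2 - k) (IbarA C K \<theta> T k))"

definition Ibar :: "(nat \<Rightarrow> real \<Rightarrow> real) \<Rightarrow> (nat \<Rightarrow> real) \<Rightarrow> real \<Rightarrow> nat \<Rightarrow> nat \<Rightarrow> real" where
  "Ibar C K \<theta> T t = IbarA C K \<theta> T (T - 1 - t)"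

definition Ival :: "(nat \<Rightarrow> real \<Rightarrow> real) \<Rightarrow> (nat \<Rightarrow> real) \<Rightarrow> real \<Rightarrow> nat \<Rightarrow> nat \<Rightarrow> real" where
  "Ival C K \<theta> T t = Inext C \<theta> t (Ibar C K \<theta> T (Suc t))"

definition Vof :: "(real \<Rightarrow> real) \<Rightarrow> real \<Rightarrow> real \<Rightarrow> real \<Rightarrow> real \<Rightarrow> real" where
  "Vof H S s Kt y = (if y < s then H S + Kt else H y)"

definition Sgrid :: "real \<Rightarrow> (real \<Rightarrow> real) \<Rightarrow> real \<Rightarrow> real \<Rightarrow> real" where
  "Sgrid \<theta> H lo hi =
     (let A = {m::int. lo \<le> zg \<theta> m \<and> zg \<theta> m \<le> hi};
          mv = Min ((\<lambda>m. H (zg \<theta> m)) ` A)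
      in zg \<theta> (Max {m \<in> A. H (zg \<theta> m) = mv}))"

definition sgrid :: "real \<Rightarrow> real \<Rightarrow> (real \<Rightarrow> real) \<Rightarrow> real \<Rightarrow> real \<Rightarrow> real" where
  "sgrid \<theta> Kt H S lo =
     (if Kt = 0 then S
      else zg \<theta> (Min {m::int. lo \<le> zg \<theta> m \<and> zg \<theta> m \<le> S \<and> H (zg \<theta> m) \<le> H S + Kt}))"

text \<open>stage k = (H_t, S_t, s_t) for t = T-1-k.  The series runs over n = j - 1 \<ge> -1.\<close>
primrec stage :: "(nat \<Rightarrow> real \<Rightarrow> real) \<Rightarrow> (nat \<Rightarrow> real) \<Rightarrow> real \<Rightarrow> nat \<Rightarrow> real
    \<Rightarrow> (nat \<Rightarrow> real measure) \<Rightarrow> nat \<Rightarrow> (real \<Rightarrow> real) \<times> real \<times> real" where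
  "stage C K \<theta> T \<alpha> D 0 = (C (T - 1), Cmin C (T - 1), sLast C K T)"
| "stage C K \<theta> T \<alpha> D (Suc k) =
     (let t = T - 2 - k;
          (H1, S1, s1) = stage C K \<theta> T \<alpha> D k;
          V1 = Vof H1 S1 s1 (K (Suc t));
          H = (\<lambda>y. C t y + \<alpha> * (\<Sum>j. V1 (y - zg \<theta> (int j - 1)) * fmass \<theta> D t (int j - 1)));
          S = Sgrid \<theta> H (Ival C K \<theta> T t) (SU C K \<theta> t);
          s = sgrid \<theta> (K t) H S (Ibar C K \<theta> T t)
      in (H, S, s))"

definition Hf :: "(nat \<Rightarrow> real \<Rightarrow> real) \<Rightarrow> (nat \<Rightarrow> real) \<Rightarrow> real \<Rightarrow> nat \<Rightarrow> real
    \<Rightarrow> (nat \<Rightarrow> real measure) \<Rightarrow> nat \<Rightarrow> real \<Rightarrow> real" where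
  "Hf C K \<theta> T \<alpha> D t = fst (stage C K \<theta> T \<alpha> D (T - 1 - t))"

definition Sf :: "(nat \<Rightarrow> real \<Rightarrow> real) \<Rightarrow> (nat \<Rightarrow> real) \<Rightarrow> real \<Rightarrow> nat \<Rightarrow> real
    \<Rightarrow> (nat \<Rightarrow> real measure) \<Rightarrow> nat \<Rightarrow> real" where
  "Sf C K \<theta> T \<alpha> D t = fst (snd (stage C K \<theta> T \<alpha> D (T - 1 - t)))"

definition sf :: "(nat \<Rightarrow> real \<Rightarrow> real) \<Rightarrow> (nat \<Rightarrow> real) \<Rightarrow> real \<Rightarrow> nat \<Rightarrow> real
    \<Rightarrow> (nat \<Rightarrow> real measure) \<Rightarrow> nat \<Rightarrow> real" where
  "sf C K \<theta> T \<alpha> D t = snd (snd (stage C K \<theta> T \<alpha> D (T - 1 - t)))"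

definition Vf :: "(nat \<Rightarrow> real \<Rightarrow> real) \<Rightarrow> (nat \<Rightarrow> real) \<Rightarrow> real \<Rightarrow> nat \<Rightarrow> real
    \<Rightarrow> (nat \<Rightarrow> real measure) \<Rightarrow> nat \<Rightarrow> real \<Rightarrow> real" where
  "Vf C K \<theta> T \<alpha> D t =
     Vof (Hf C K \<theta> T \<alpha> D t) (Sf C K \<theta> T \<alpha> D t) (sf C K \<theta> T \<alpha> D t) (K t)"

definition subKconvex :: "real \<Rightarrow> real \<Rightarrow> (real \<Rightarrow> real) \<Rightarrow> bool" where
  "subKconvex \<theta> K g \<longleftrightarrow>
     (\<forall>x y \<tau>. \<forall>m::int. x \<le> y \<and> y \<le> zg \<theta> m \<and> 0 \<le> \<tau> \<and> \<tau> \<le> 1 \<and>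
        y = \<tau> * x + (1 - \<tau>) * zg \<theta> m \<longrightarrow>
        g y \<le> \<tau> * g x + (1 - \<tau>) * (g (zg \<theta> m) + K))"

end

theory Submission
  imports Defs
begin

text \<open>Backward induction on \<open>t\<close> with the invariant \<open>sS_invariant\<close>: \<open>H\<^sub>t(y)\<close> lies below the
  chord from \<open>(x, H\<^sub>t x)\<close> to \<open>(z, H\<^sub>t z + K\<^sub>t)\<close> whenever \<open>x \<le> y \<le> z\<close> and \<open>z\<close> is a grid point,
  \<open>S\<^sub>t\<close> minimises \<open>H\<^sub>t\<close> over the grid, and \<open>Ibar\<^sub>t \<le> s\<^sub>t \<le> S\<^sub>t\<close> with \<open>H\<^sub>t \<le> H\<^sub>t(S\<^sub>t) + K\<^sub>t\<close> on
  \<open>[s\<^sub>t, S\<^sub>t]\<close>. Flattening \<open>H\<^sub>t\<close> to \<open>H\<^sub>t(S\<^sub>t) + K\<^sub>t\<close> left of \<open>s\<^sub>t\<close> keeps the chord property, so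
  \<open>V\<^sub>t\<close> inherits it. Averaging over the grid-valued demand preserves it because a grid point
  shifted by a grid point is a grid point, and adding the convex \<open>C\<^sub>t\<close> with the factor \<open>\<alpha>\<close>
  works since \<open>\<alpha> K\<^sub>t\<^sub>+\<^sub>1 \<le> K\<^sub>t\<close>. Grid minimality of \<open>S\<^sub>t\<close>, found by searching only the window
  \<open>[I\<^sub>t, S\<^sup>U\<^sub>t]\<close>, holds because left of \<open>I\<^sub>t\<close> every demand shift falls where \<open>V\<^sub>t\<^sub>+\<^sub>1\<close> is flat
  while \<open>C\<^sub>t\<close> decreases, and right of \<open>S\<^sup>U\<^sub>t\<close> the increase of \<open>C\<^sub>t\<close> by more than \<open>K\<^sub>t\<close>
  outweighs any decrease of the expectation term.\<close>

definition below_K_chord :: "(real \<Rightarrow> real) \<Rightarrow> real \<Rightarrow> real \<Rightarrow> real \<Rightarrow> real \<Rightarrow> bool" where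
  "below_K_chord H K x y z \<longleftrightarrow> (z - x) * H y \<le> (z - y) * H x + (y - x) * (H z + K)"

lemma zg_diff: "zg \<theta> a - zg \<theta> b = zg \<theta> (a - b)"
  by (simp add: zg_def algebra_simps)

lemma zg_le_iff: "\<theta> > 0 \<Longrightarrow> zg \<theta> a \<le> zg \<theta> b \<longleftrightarrow> a \<le> b"
  by (simp add: zg_def)

lemma zg_less_iff: "\<theta> > 0 \<Longrightarrow> zg \<theta> a < zg \<theta> b \<longleftrightarrow> a < b"
  by (simp add: zg_def)

lemma convex_on_chord:
  fixes f :: "real \<Rightarrow> real"
  assumes "convex_on UNIV f" "x \<le> y" "y \<le> z"
  shows "(z - x) * f y \<le> (z - y) * f x + (y - x) * f z"
proof (cases "x = z")
  case True
  then show ?thesis using assms by simp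
next
  case False
  then have d: "z - x > 0" using assms by simp
  have "f y \<le> (f z - f x) / (z - x) * (y - x) + f x"
    using convex_onD_Icc'[OF convex_on_subset[OF assms(1)]] assms by auto
  then have "(z - x) * f y \<le> (z - x) * ((f z - f x) / (z - x) * (y - x) + f x)"
    using d by (simp add: mult_left_mono)
  also have "\<dots> = (z - y) * f x + (y - x) * f z"
    using d by (simp add: field_simps)
  finally show ?thesis .
qed

lemma below_K_chord_if_convex:
  assumes "convex_on UNIV f" "0 \<le> K" "x \<le> y" "y \<le> z"
  shows "below_K_chord f K x y z"
  using convex_on_chord[OF assms(1,3,4)] mult_nonneg_nonneg[of "y - x" K] assms(2-4)
  unfolding below_K_chord_def by (simp add: algebra_simps)

lemma below_K_chord_bound:
  assumes chord: "below_K_chord H K x y z" and xy: "x \<le> y" "y \<le> z" and Hx: "H x \<le> H z + K"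
  shows "H y \<le> H z + K"
proof (cases "x = z")
  case True
  then have "y = x" using xy by simp
  then show ?thesis using Hx by simp
next
  case False
  then have d: "z - x > 0" using xy by simp
  have "(z - x) * H y \<le> (z - y) * H x + (y - x) * (H z + K)"
    using chord by (simp add: below_K_chord_def)
  also have "\<dots> \<le> (z - y) * (H z + K) + (y - x) * (H z + K)"
    using xy Hx by (intro add_right_mono mult_left_mono) auto
  also have "\<dots> = (z - x) * (H z + K)"
    by (simp add: algebra_simps)
  finally show ?thesis using d by simp
qed

text \<open>Moving the left end of the chord from \<open>S\<close> to \<open>x \<le> S\<close> and raising its value there to
  \<open>H S + K \<le> H z + K\<close> only raises the chord at \<open>y\<close>.\<close>
lemma below_K_chord_extend_left:
  assumes chord: "below_K_chord H K S y z"
    and "x \<le> S" "S \<le> y" "y \<le> z" "H S \<le> H z" "0 \<le> K"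
  shows "(z - x) * H y \<le> (z - y) * (H S + K) + (y - x) * (H z + K)"
proof -
  have Hy: "H y \<le> H z + K"
    using below_K_chord_bound[OF chord] assms by simp
  have "0 \<le> (z - y) * K" using assms by simp
  then have "(z - S) * H y \<le> (z - y) * (H S + K) + (y - S) * (H z + K)"
    using chord unfolding below_K_chord_def by (simp add: ring_distribs)
  moreover have "(S - x) * H y \<le> (S - x) * (H z + K)"
    using Hy assms by (intro mult_left_mono) auto
  ultimately show ?thesis by (simp add: algebra_simps)
qed

lemma below_K_chord_convex_add:
  fixes f g :: "real \<Rightarrow> real"
  assumes "convex_on UNIV f" "below_K_chord g K' x y z" "x \<le> y" "y \<le> z"
    and "0 < \<alpha>" "\<alpha> * K' \<le> K"
  shows "below_K_chord (\<lambda>u. f u + \<alpha> * g u) K x y z"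
proof -
  have "(z - x) * g y \<le> (z - y) * g x + (y - x) * (g z + K')"
    using assms(2) by (simp add: below_K_chord_def)
  from mult_left_mono[OF this less_imp_le[OF assms(5)]]
  have "(z - x) * (\<alpha> * g y) \<le> (z - y) * (\<alpha> * g x) + (y - x) * (\<alpha> * g z + \<alpha> * K')"
    by (simp add: algebra_simps)
  moreover have "(y - x) * (\<alpha> * K') \<le> (y - x) * K"
    using assms by (intro mult_left_mono) auto
  ultimately show ?thesis
    using convex_on_chord[OF assms(1,3,4)] unfolding below_K_chord_def by (simp add: algebra_simps)
qed

lemma subKconvexI_below_K_chord:
  assumes K0: "0 \<le> K" and chord: "\<And>x y m. x \<le> y \<Longrightarrow> y \<le> zg \<theta> m \<Longrightarrow> below_K_chord H K x y (zg \<theta> m)"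
  shows "subKconvex \<theta> K H"
  unfolding subKconvex_def
proof (intro allI impI)
  fix x y \<tau> and m :: int
  assume a: "x \<le> y \<and> y \<le> zg \<theta> m \<and> 0 \<le> \<tau> \<and> \<tau> \<le> 1 \<and> y = \<tau> * x + (1 - \<tau>) * zg \<theta> m"
  let ?z = "zg \<theta> m"
  show "H y \<le> \<tau> * H x + (1 - \<tau>) * (H ?z + K)"
  proof (cases "x = ?z")
    case True
    then have "y = x" using a by auto
    then show ?thesis using True K0 a by (simp add: algebra_simps mult_left_le)
  next
    case False
    then have d: "?z - x > 0" using a by auto
    have e1: "?z - y = \<tau> * (?z - x)" and e2: "y - x = (1 - \<tau>) * (?z - x)"
      using a by (auto simp: algebra_simps)
    have "below_K_chord H K x y ?z" using chord a by blast
    then have "(?z - x) * H y \<le> (?z - x) * (\<tau> * H x + (1 - \<tau>) * (H ?z + K))"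
      unfolding below_K_chord_def e1 e2 by (simp add: algebra_simps)
    then show ?thesis using d by simp
  qed
qed

definition sS_invariant :: "real \<Rightarrow> (real \<Rightarrow> real) \<Rightarrow> real \<Rightarrow> real \<Rightarrow> real \<Rightarrow> real \<Rightarrow> bool" where
  "sS_invariant \<theta> H S s K lo \<longleftrightarrow>
     0 \<le> K \<and> lo \<le> s \<and> s \<le> S \<and> (\<forall>y. s \<le> y \<and> y \<le> S \<longrightarrow> H y \<le> H S + K) \<and>
     (\<forall>m. H S \<le> H (zg \<theta> m)) \<and>
     (\<forall>x y m. x \<le> y \<and> y \<le> zg \<theta> m \<longrightarrow> below_K_chord H K x y (zg \<theta> m))"

context
  fixes \<theta> :: real and H :: "real \<Rightarrow> real" and S s K lo :: real
  assumes inv: "sS_invariant \<theta> H S s K lo"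
begin

lemma Vof_grid_ge_min: "H S \<le> Vof H S s K (zg \<theta> m)"
  using inv by (auto simp: Vof_def sS_invariant_def)

lemma Vof_below: "u < lo \<Longrightarrow> Vof H S s K u = H S + K"
  using inv by (auto simp: Vof_def sS_invariant_def)

lemma Vof_grid_mono:
  assumes "\<theta> > 0" "b \<le> a"
  shows "Vof H S s K (zg \<theta> b) \<le> Vof H S s K (zg \<theta> a) + K"
proof (cases "zg \<theta> b < s")
  case True
  then show ?thesis using Vof_grid_ge_min[of a] by (simp add: Vof_def)
next
  case False
  have ba: "zg \<theta> b \<le> zg \<theta> a" using assms zg_le_iff by blast
  with False have V: "Vof H S s K (zg \<theta> b) = H (zg \<theta> b)" "Vof H S s K (zg \<theta> a) = H (zg \<theta> a)"
    by (auto simp: Vof_def)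
  have HS: "H S \<le> H (zg \<theta> a)" using inv by (simp add: sS_invariant_def)
  show ?thesis
  proof (cases "zg \<theta> b \<le> S")
    case True
    then have "H (zg \<theta> b) \<le> H S + K" using inv False by (simp add: sS_invariant_def)
    then show ?thesis using V HS by simp
  next
    case S_le: False
    have "below_K_chord H K S (zg \<theta> b) (zg \<theta> a)"
      using inv S_le ba by (simp add: sS_invariant_def)
    moreover have "H S \<le> H (zg \<theta> a) + K"
      using HS inv unfolding sS_invariant_def by linarith
    ultimately show ?thesis
      using below_K_chord_bound S_le ba V by simp
  qed
qed

lemma Vof_below_K_chord:
  assumes xy: "x \<le> y" "y \<le> zg \<theta> m"
  shows "below_K_chord (Vof H S s K) K x y (zg \<theta> m)"
proof -
  let ?z = "zg \<theta> m" and ?V = "Vof H S s K"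
  have K0: "0 \<le> K" and sS: "s \<le> S" and HSz: "H S \<le> H ?z"
    and chord: "\<And>x y. x \<le> y \<Longrightarrow> y \<le> ?z \<Longrightarrow> below_K_chord H K x y ?z"
    using inv by (auto simp: sS_invariant_def)
  show ?thesis
  proof (cases "x < s")
    case False
    then have "?V x = H x" "?V y = H y" "?V ?z = H ?z" using xy by (auto simp: Vof_def)
    then show ?thesis using chord[OF xy] by (simp add: below_K_chord_def)
  next
    case xs: True
    then have Vx: "?V x = H S + K" by (simp add: Vof_def)
    show ?thesis
    proof (cases "y < S")
      case True
      have "?V y \<le> H S + K" using inv True by (auto simp: Vof_def sS_invariant_def)
      moreover have "H S + K \<le> ?V ?z + K" using Vof_grid_ge_min by simp
      ultimately have "(?z - y) * ?V y + (y - x) * ?V y \<le> (?z - y) * (H S + K) + (y - x) * (?V ?z + K)"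
        using xy by (intro add_mono mult_left_mono) auto
      then show ?thesis unfolding below_K_chord_def Vx by (simp add: algebra_simps)
    next
      case False
      then have "?V y = H y" "?V ?z = H ?z" using sS xy by (auto simp: Vof_def)
      moreover have "(?z - x) * H y \<le> (?z - y) * (H S + K) + (y - x) * (H ?z + K)"
        using xs sS False xy HSz K0 by (intro below_K_chord_extend_left[OF chord]) auto
      ultimately show ?thesis unfolding below_K_chord_def Vx by simp
    qed
  qed
qed

end

text \<open>\<open>grid_expectation \<theta> g w y\<close> is \<open>\<Sum>\<^sub>n\<^sub>\<ge>\<^sub>-\<^sub>1 g (y - z\<^sub>n) f(n)\<close>, indexed by \<open>j = n + 1 :: nat\<close>.
  Shifting a grid point by a grid point stays on the grid, so inequalities with a grid right end
  survive the averaging.\<close>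
definition grid_expectation :: "real \<Rightarrow> (real \<Rightarrow> real) \<Rightarrow> (nat \<Rightarrow> real) \<Rightarrow> real \<Rightarrow> real" where
  "grid_expectation \<theta> g w y = (\<Sum>j. g (y - zg \<theta> (int j - 1)) * w j)"

context
  fixes \<theta> :: real and g :: "real \<Rightarrow> real" and w :: "nat \<Rightarrow> real"
  assumes w_nonneg: "\<And>j. 0 \<le> w j" and w_summable: "summable w" and w_le_1: "suminf w \<le> 1"
    and g_summable: "\<And>y. summable (\<lambda>j. \<bar>g (y - zg \<theta> (int j - 1)) * w j\<bar>)"
begin

lemma summable_grid_terms: "summable (\<lambda>j. g (y - zg \<theta> (int j - 1)) * w j)"
  using summable_rabs_cancel[OF g_summable] .

lemma grid_expectation_below_K_chord:
  assumes K0: "0 \<le> K"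
    and chord: "\<And>x y m. x \<le> y \<Longrightarrow> y \<le> zg \<theta> m \<Longrightarrow> below_K_chord g K x y (zg \<theta> m)"
    and xy: "x \<le> y" "y \<le> zg \<theta> m"
  shows "below_K_chord (grid_expectation \<theta> g w) K x y (zg \<theta> m)"
proof -
  let ?z = "zg \<theta> m" and ?n = "\<lambda>j. zg \<theta> (int j - 1)"
  define a where "a = (\<lambda>u j. g (u - ?n j) * w j)"
  have sa: "summable (a u)" for u
    unfolding a_def by (rule summable_grid_terms)
  have termwise: "(?z - x) * a y j \<le> (?z - y) * a x j + (y - x) * a ?z j + (y - x) * K * w j" for j
  proof -
    have zz: "?z - ?n j = zg \<theta> (m - (int j - 1))" by (simp add: zg_diff)
    have "below_K_chord g K (x - ?n j) (y - ?n j) (zg \<theta> (m - (int j - 1)))"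
      using chord xy zz by simp
    then have "(?z - x) * g (y - ?n j) \<le> (?z - y) * g (x - ?n j) + (y - x) * (g (?z - ?n j) + K)"
      unfolding below_K_chord_def zz[symmetric] by simp
    from mult_right_mono[OF this w_nonneg[of j]]
    show ?thesis by (simp add: a_def algebra_simps)
  qed
  have "(\<Sum>j. (?z - x) * a y j) \<le> (\<Sum>j. (?z - y) * a x j + (y - x) * a ?z j + (y - x) * K * w j)"
    using sa w_summable by (intro suminf_le[OF termwise] summable_add summable_mult)
  also have "\<dots> = (?z - y) * suminf (a x) + (y - x) * suminf (a ?z) + (y - x) * K * suminf w"
    using sa w_summable by (simp add: suminf_add[symmetric] summable_mult suminf_mult summable_add)
  also have "(y - x) * K * suminf w \<le> (y - x) * K"
    using w_le_1 xy K0 by (simp add: mult_left_le)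
  finally have "(?z - x) * suminf (a y) \<le> (?z - y) * suminf (a x) + (y - x) * suminf (a ?z) + (y - x) * K"
    using sa by (simp add: suminf_mult)
  then show ?thesis
    unfolding below_K_chord_def grid_expectation_def a_def by (simp add: algebra_simps)
qed

lemma grid_expectation_grid_mono:
  assumes mono: "\<And>b a. b \<le> a \<Longrightarrow> g (zg \<theta> b) \<le> g (zg \<theta> a) + K" and K0: "0 \<le> K" and ba: "b \<le> a"
  shows "grid_expectation \<theta> g w (zg \<theta> b) \<le> grid_expectation \<theta> g w (zg \<theta> a) + K"
proof -
  define A where "A = (\<lambda>u j. g (u - zg \<theta> (int j - 1)) * w j)"
  have sa: "summable (A u)" for u
    unfolding A_def by (rule summable_grid_terms)
  have termwise: "A (zg \<theta> b) j \<le> A (zg \<theta> a) j + K * w j" for j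
  proof -
    have "g (zg \<theta> (b - (int j - 1))) \<le> g (zg \<theta> (a - (int j - 1))) + K"
      using mono ba by simp
    from mult_right_mono[OF this w_nonneg[of j]]
    show ?thesis by (simp add: A_def zg_diff algebra_simps)
  qed
  have "suminf (A (zg \<theta> b)) \<le> (\<Sum>j. A (zg \<theta> a) j + K * w j)"
    using sa w_summable by (intro suminf_le[OF termwise] summable_add summable_mult)
  also have "\<dots> = suminf (A (zg \<theta> a)) + K * suminf w"
    using sa w_summable by (simp add: suminf_add[symmetric] summable_mult suminf_mult)
  also have "K * suminf w \<le> K"
    using K0 w_le_1 by (simp add: mult_left_le)
  finally show ?thesis unfolding grid_expectation_def A_def by simp
qed

end

lemma grid_expectation_eq_if_flat:
  assumes flat: "\<And>u. u < c \<Longrightarrow> g u = g0" and "\<theta> > 0" "y + \<theta> < c" "y' + \<theta> < c"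
  shows "grid_expectation \<theta> g w y = grid_expectation \<theta> g w y'"
proof -
  have "g (y - zg \<theta> (int j - 1)) = g (y' - zg \<theta> (int j - 1))" for j
  proof -
    have "- \<theta> \<le> zg \<theta> (int j - 1)"
      using \<open>\<theta> > 0\<close> by (simp add: zg_def algebra_simps)
    then have "y - zg \<theta> (int j - 1) < c" "y' - zg \<theta> (int j - 1) < c"
      using assms(3,4) by linarith+
    then show ?thesis using flat by simp
  qed
  then show ?thesis unfolding grid_expectation_def by simp
qed

lemma coercive_eventually_above:
  fixes f :: "real \<Rightarrow> real"
  assumes "filterlim f at_top at_infinity"
  obtains R where "0 \<le> R" "\<And>y. R \<le> \<bar>y\<bar> \<Longrightarrow> B < f y"
proof -
  have "eventually (\<lambda>y. B + 1 \<le> f y) at_infinity"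
    using assms by (simp add: filterlim_at_top)
  then obtain b where "\<And>y. b \<le> norm y \<Longrightarrow> B + 1 \<le> f y"
    unfolding eventually_at_infinity by blast
  then show ?thesis
    using that[of "max b 0"] by force
qed

lemma convex_antimono_left_of_min:
  fixes f :: "real \<Rightarrow> real"
  assumes "convex_on UNIV f" "\<forall>u. f m \<le> f u" "x \<le> y" "y \<le> m"
  shows "f y \<le> f x"
  using convex_on_le_max[of x m f y] convex_on_subset[OF assms(1), of "{x..m}"] assms by auto

lemma convex_mono_right_of_min:
  fixes f :: "real \<Rightarrow> real"
  assumes "convex_on UNIV f" "\<forall>u. f m \<le> f u" "m \<le> y" "y \<le> z"
  shows "f y \<le> f z"
  using convex_on_le_max[of m z f y] convex_on_subset[OF assms(1), of "{m..z}"] assms by auto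

lemma Cmin_least_minimiser:
  assumes cv: "convex_on UNIV (C t)" and co: "filterlim (C t) at_top at_infinity"
  shows "\<forall>x. C t (Cmin C t) \<le> C t x" and "\<And>y. \<forall>x. C t y \<le> C t x \<Longrightarrow> Cmin C t \<le> y"
proof -
  let ?f = "C t"
  have ct: "continuous_on UNIV ?f" using convex_on_continuous[OF open_UNIV cv] .
  obtain R where R: "0 \<le> R" "\<And>y. R \<le> \<bar>y\<bar> \<Longrightarrow> ?f 0 < ?f y"
    using coercive_eventually_above[OF co] by blast
  obtain x0 where x0: "x0 \<in> {-R..R}" "\<forall>y\<in>{-R..R}. ?f x0 \<le> ?f y"
    using continuous_attains_inf[of "{-R..R}" ?f] R(1) continuous_on_subset[OF ct] by auto
  have x0_min: "?f x0 \<le> ?f y" for y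
  proof (cases "y \<in> {-R..R}")
    case False
    then have "?f 0 < ?f y" using R(2) by auto
    moreover have "?f x0 \<le> ?f 0" using x0 R(1) by auto
    ultimately show ?thesis by simp
  qed (use x0 in auto)
  define M where "M = {y. ?f y = ?f x0}"
  have minM: "(\<forall>x. ?f y \<le> ?f x) \<longleftrightarrow> y \<in> M" for y
    using x0_min by (auto simp: M_def intro: order.antisym)
  have closedM: "closed M"
    unfolding M_def by (rule closed_Collect_eq[OF ct continuous_on_const])
  have "- R \<le> y" if "y \<in> M" for y
    using that x0_min[of 0] R(2)[of y] by (force simp: M_def)
  then have bdd: "bdd_below M" by (rule bdd_belowI)
  have InfM: "Inf M \<in> M"
    by (rule closed_contains_Inf) (use closedM bdd in \<open>auto simp: M_def\<close>)
  have "Cmin C t = Inf M"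
    unfolding Cmin_def
    by (rule Least_equality) (use InfM minM bdd in \<open>auto intro: cInf_lower\<close>)
  then show "\<forall>x. C t (Cmin C t) \<le> C t x" and "\<And>y. \<forall>x. C t y \<le> C t x \<Longrightarrow> Cmin C t \<le> y"
    using InfM minM bdd by (auto intro: cInf_lower)
qed

lemma int_GreatestI_bounded:
  fixes P :: "int \<Rightarrow> bool"
  assumes "P m0" "\<And>m. P m \<Longrightarrow> m \<le> B"
  shows "P (GREATEST m. P m)" "\<And>m. P m \<Longrightarrow> m \<le> (GREATEST m. P m)"
proof -
  let ?A = "{m. P m \<and> m0 \<le> m}"
  have fin: "finite ?A" by (rule finite_subset[of _ "{m0..B}"]) (use assms in auto)
  have PM: "P (Max ?A)" and ge: "m0 \<le> Max ?A"
    using Max_in[OF fin] assms(1) by auto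
  have ub: "P m \<Longrightarrow> m \<le> Max ?A" for m
    using Max_ge[OF fin, of m] ge by (cases "m0 \<le> m") auto
  have "(GREATEST m. P m) = Max ?A" by (rule Greatest_equality) (use PM ub in auto)
  then show "P (GREATEST m. P m)" "\<And>m. P m \<Longrightarrow> m \<le> (GREATEST m. P m)"
    using PM ub by simp_all
qed

lemma int_LeastI_bounded:
  fixes P :: "int \<Rightarrow> bool"
  assumes "P m0" "\<And>m. P m \<Longrightarrow> B \<le> m"
  shows "P (LEAST m. P m)"
proof -
  let ?A = "{m. P m \<and> m \<le> m0}"
  have fin: "finite ?A" by (rule finite_subset[of _ "{B..m0}"]) (use assms in auto)
  have PM: "P (Min ?A)" and le: "Min ?A \<le> m0"
    using Min_in[OF fin] assms(1) by auto
  have lb: "P m \<Longrightarrow> Min ?A \<le> m" for m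
    using Min_le[OF fin, of m] le by (cases "m \<le> m0") auto
  have "(LEAST m. P m) = Min ?A" by (rule Least_equality) (use PM lb in auto)
  then show ?thesis using PM by simp
qed

lemma finite_grid_window:
  assumes "\<theta> > 0"
  shows "finite {m::int. lo \<le> zg \<theta> m \<and> zg \<theta> m \<le> hi}"
proof (rule finite_subset[of _ "{\<lceil>lo/\<theta>\<rceil>..\<lfloor>hi/\<theta>\<rfloor>}"])
  show "{m::int. lo \<le> zg \<theta> m \<and> zg \<theta> m \<le> hi} \<subseteq> {\<lceil>lo/\<theta>\<rceil>..\<lfloor>hi/\<theta>\<rfloor>}"
    using assms by (auto simp: zg_def ceiling_le_iff le_floor_iff field_simps)
qed simp

lemma ex_grid_le: "\<theta> > 0 \<Longrightarrow> \<exists>m. zg \<theta> m \<le> c"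
  by (rule exI[of _ "\<lfloor>c/\<theta>\<rfloor>"]) (simp add: zg_def, metis floor_divide_lower)

lemma ex_grid_ge: "\<theta> > 0 \<Longrightarrow> \<exists>m. c \<le> zg \<theta> m"
  by (rule exI[of _ "\<lceil>c/\<theta>\<rceil>"]) (simp add: zg_def, metis ceiling_divide_upper)

lemma grid_le_imp_le_ceiling:
  assumes "\<theta> > 0" "zg \<theta> m \<le> c"
  shows "m \<le> \<lceil>c/\<theta>\<rceil>"
proof -
  have "real_of_int m \<le> c/\<theta>" using assms by (simp add: zg_def pos_le_divide_eq)
  then show ?thesis by (metis ceiling_mono ceiling_of_int)
qed

lemma grid_ge_imp_floor_le:
  assumes "\<theta> > 0" "c \<le> zg \<theta> m"
  shows "\<lfloor>c/\<theta>\<rfloor> \<le> m"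
proof -
  have "c/\<theta> \<le> real_of_int m" using assms by (simp add: zg_def pos_divide_le_eq)
  then show ?thesis by (metis floor_mono floor_of_int)
qed

lemma n0_bracket:
  assumes "\<theta> > 0"
  shows "zg \<theta> (n0 C \<theta> t) < Cmin C t" "Cmin C t \<le> zg \<theta> (n0 C \<theta> t + 1)"
proof -
  let ?c = "Cmin C t"
  have "zg \<theta> n < ?c \<and> ?c \<le> zg \<theta> (n + 1) \<longleftrightarrow> n = \<lceil>?c/\<theta>\<rceil> - 1" for n
  proof -
    have "zg \<theta> n < ?c \<and> ?c \<le> zg \<theta> (n + 1) \<longleftrightarrow> n < ?c/\<theta> \<and> ?c/\<theta> \<le> n + 1"
      using assms by (auto simp: zg_def field_simps)
    also have "\<dots> \<longleftrightarrow> \<lceil>?c/\<theta>\<rceil> = n + 1"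
      by (simp add: ceiling_eq_iff)
    also have "\<dots> \<longleftrightarrow> n = \<lceil>?c/\<theta>\<rceil> - 1"
      by linarith
    finally show ?thesis .
  qed
  then have "\<exists>!n. zg \<theta> n < ?c \<and> ?c \<le> zg \<theta> (n + 1)" by auto
  from theI'[OF this] show "zg \<theta> (n0 C \<theta> t) < ?c" "?c \<le> zg \<theta> (n0 C \<theta> t + 1)"
    unfolding n0_def by auto
qed

lemma Inext_grid:
  assumes "\<theta> > 0"
  obtains i where "Inext C \<theta> t b = zg \<theta> i" "zg \<theta> i < b - \<theta>" "zg \<theta> i < Cmin C t"
proof -
  let ?c = "min (b - \<theta>) (Cmin C t)"
  obtain m where "zg \<theta> m \<le> ?c - \<theta>" using ex_grid_le[OF assms] by blast
  then have m: "zg \<theta> m < ?c" using assms by linarith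
  have "zg \<theta> (GREATEST m. zg \<theta> m < ?c) < ?c"
    by (rule int_GreatestI_bounded[of _ m "\<lceil>?c/\<theta>\<rceil>"])
       (use m assms in \<open>auto intro: grid_le_imp_le_ceiling\<close>)
  then show ?thesis using that by (simp add: Inext_def)
qed

lemma SU_grid:
  assumes "\<theta> > 0" and co: "filterlim (C t) at_top at_infinity"
  obtains u where "SU C K \<theta> t = zg \<theta> u" "Cmin C t \<le> zg \<theta> u"
    "C t (zg \<theta> (n0 C \<theta> t)) + K t < C t (zg \<theta> u)"
proof -
  let ?P = "\<lambda>m. Cmin C t \<le> zg \<theta> m \<and> C t (zg \<theta> (n0 C \<theta> t)) + K t < C t (zg \<theta> m)"
  obtain R where R: "0 \<le> R" "\<And>y. R \<le> \<bar>y\<bar> \<Longrightarrow> C t (zg \<theta> (n0 C \<theta> t)) + K t < C t y"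
    using coercive_eventually_above[OF co] by blast
  obtain m where "max R (Cmin C t) \<le> zg \<theta> m" using ex_grid_ge[OF assms(1)] by blast
  then have "?P m" using R by auto
  then have "?P (LEAST m. ?P m)"
    by (rule int_LeastI_bounded[of _ _ "\<lfloor>Cmin C t / \<theta>\<rfloor>"])
       (use assms(1) in \<open>auto intro: grid_ge_imp_floor_le\<close>)
  then show ?thesis using that by (simp add: SU_def)
qed

lemma Ibarnext_le:
  assumes "\<theta> > 0" and co: "filterlim (C t) at_top at_infinity" and "0 \<le> K t"
  shows "Ibarnext C K \<theta> t (zg \<theta> i) \<le> zg \<theta> i"
proof -
  let ?I = "zg \<theta> i"
  let ?P = "\<lambda>m. zg \<theta> m \<le> ?I \<and> C t ?I + K t < C t (zg \<theta> m)"
  obtain R where R: "0 \<le> R" "\<And>y. R \<le> \<bar>y\<bar> \<Longrightarrow> C t ?I + K t < C t y"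
    using coercive_eventually_above[OF co] by blast
  obtain m where "zg \<theta> m \<le> min (- R) ?I" using ex_grid_le[OF assms(1)] by blast
  then have "?P m" using R by auto
  then have "?P (GREATEST m. ?P m)"
    by (rule int_GreatestI_bounded[of _ _ "\<lceil>?I / \<theta>\<rceil>"])
       (use assms(1) in \<open>auto intro: grid_le_imp_le_ceiling\<close>)
  moreover have "\<not> ?P i" using assms(3) by simp
  ultimately have "(GREATEST m. ?P m) \<le> i" "(GREATEST m. ?P m) \<noteq> i"
    using zg_le_iff[OF assms(1)] by auto
  then have "zg \<theta> ((GREATEST m. ?P m) + 1) \<le> ?I" using zg_le_iff[OF assms(1)] by simp
  moreover have "Ibarnext C K \<theta> t ?I = zg \<theta> ((GREATEST m. ?P m) + 1)"
    by (simp add: Ibarnext_def zg_def algebra_simps)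
  ultimately show ?thesis by simp
qed

lemma Sgrid_minimises_window:
  assumes "\<theta> > 0" "lo \<le> zg \<theta> m0" "zg \<theta> m0 \<le> hi"
  obtains i where "Sgrid \<theta> H lo hi = zg \<theta> i" "lo \<le> zg \<theta> i" "zg \<theta> i \<le> hi"
    "\<And>m. lo \<le> zg \<theta> m \<Longrightarrow> zg \<theta> m \<le> hi \<Longrightarrow> H (zg \<theta> i) \<le> H (zg \<theta> m)"
proof -
  define A where "A = {m::int. lo \<le> zg \<theta> m \<and> zg \<theta> m \<le> hi}"
  define mv where "mv = Min ((\<lambda>m. H (zg \<theta> m)) ` A)"
  define B where "B = {m \<in> A. H (zg \<theta> m) = mv}"
  have finA: "finite A" unfolding A_def by (rule finite_grid_window[OF assms(1)])
  have "m0 \<in> A" using assms by (simp add: A_def)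
  then have "mv \<in> (\<lambda>m. H (zg \<theta> m)) ` A" unfolding mv_def using finA by (intro Min_in) auto
  then have "B \<noteq> {}" by (auto simp: B_def)
  then have "Max B \<in> B" using finA by (intro Max_in) (simp_all add: B_def)
  moreover have "H (zg \<theta> m) \<ge> mv" if "m \<in> A" for m
    unfolding mv_def using finA that by (intro Min_le) auto
  moreover have "Sgrid \<theta> H lo hi = zg \<theta> (Max B)"
    unfolding Sgrid_def Let_def A_def[symmetric] mv_def[symmetric] B_def[symmetric] ..
  ultimately show ?thesis using that by (auto simp: A_def B_def)
qed

lemma sgrid_bounds:
  assumes "\<theta> > 0" "0 \<le> K" "lo \<le> zg \<theta> i"
  shows "lo \<le> sgrid \<theta> K H (zg \<theta> i) lo" "sgrid \<theta> K H (zg \<theta> i) lo \<le> zg \<theta> i"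
    "H (sgrid \<theta> K H (zg \<theta> i) lo) \<le> H (zg \<theta> i) + K"
proof -
  define B where "B = {m::int. lo \<le> zg \<theta> m \<and> zg \<theta> m \<le> zg \<theta> i \<and> H (zg \<theta> m) \<le> H (zg \<theta> i) + K}"
  have "finite B"
    by (rule finite_subset[OF _ finite_grid_window[OF assms(1), of lo "zg \<theta> i"]]) (auto simp: B_def)
  moreover have "i \<in> B" using assms by (simp add: B_def)
  ultimately have "Min B \<in> B" by (intro Min_in) auto
  then have "lo \<le> s \<and> s \<le> zg \<theta> i \<and> H s \<le> H (zg \<theta> i) + K" if "s = sgrid \<theta> K H (zg \<theta> i) lo" for s
    using that assms by (cases "K = 0") (auto simp: sgrid_def B_def)
  then show "lo \<le> sgrid \<theta> K H (zg \<theta> i) lo" "sgrid \<theta> K H (zg \<theta> i) lo \<le> zg \<theta> i"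
    "H (sgrid \<theta> K H (zg \<theta> i) lo) \<le> H (zg \<theta> i) + K" by blast+
qed

lemma sLast_props:
  assumes cv: "convex_on UNIV (C (T - 1))" and co: "filterlim (C (T - 1)) at_top at_infinity"
    and K0: "0 \<le> K (T - 1)"
  shows "sLast C K T \<le> Cmin C (T - 1)"
    "C (T - 1) (sLast C K T) = C (T - 1) (Cmin C (T - 1)) + K (T - 1)"
proof -
  let ?f = "C (T - 1)" and ?m = "Cmin C (T - 1)" and ?K = "K (T - 1)"
  note minimiser = Cmin_least_minimiser[where C=C and t="T - 1", OF cv co]
  obtain R where R: "0 \<le> R" "\<And>y. R \<le> \<bar>y\<bar> \<Longrightarrow> ?f ?m + ?K < ?f y"
    using coercive_eventually_above[OF co] by blast
  define a where "a = - (R + \<bar>?m\<bar>)"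
  have "R \<le> \<bar>a\<bar>" using R(1) by (simp add: a_def)
  then have "?f ?m + ?K \<le> ?f a" using R(2) by fastforce
  moreover have "continuous_on {a..?m} ?f"
    using convex_on_continuous[OF open_UNIV cv] continuous_on_subset by blast
  ultimately obtain s where s: "s \<le> ?m" "?f s = ?f ?m + ?K"
    using IVT2'[of ?f ?m "?f ?m + ?K" a] K0 R(1) by (force simp: a_def)
  have unique: "u = v" if u: "u \<le> ?m" "?f u = ?f ?m + ?K" and v: "v \<le> ?m" "?f v = ?f ?m + ?K"
    and "u \<le> v" for u v
  proof (rule ccontr)
    assume "u \<noteq> v"
    with \<open>u \<le> v\<close> have "u < v" by simp
    have "(?m - u) * ?f v \<le> (?m - v) * ?f u + (v - u) * ?f ?m"
      using convex_on_chord[OF cv \<open>u \<le> v\<close> v(1)] .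
    then have "(v - u) * ?K \<le> 0" using u v by (simp add: algebra_simps)
    with \<open>u < v\<close> K0 have "?K = 0" by (simp add: mult_le_0_iff)
    then have "?m \<le> u" using minimiser u by simp
    then show False using \<open>u < v\<close> v(1) by simp
  qed
  have "\<exists>!s. s \<le> ?m \<and> ?f s = ?f ?m + ?K"
  proof (rule ex_ex1I)
    show "\<exists>s. s \<le> ?m \<and> ?f s = ?f ?m + ?K" using s by blast
  next
    fix x y assume "x \<le> ?m \<and> ?f x = ?f ?m + ?K" "y \<le> ?m \<and> ?f y = ?f ?m + ?K"
    then show "x = y" using unique[of x y] unique[of y x] by (cases "x \<le> y") auto
  qed
  from theI'[OF this] show "sLast C K T \<le> ?m" "?f (sLast C K T) = ?f ?m + ?K"
    unfolding sLast_def by auto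
qed

text \<open>Left of \<open>I\<close> the expectation term is constant and \<open>f\<close> decreases; right of \<open>U\<close>, \<open>f\<close> exceeds
  \<open>f (z\<^sub>n) + K\<close>, which outweighs the drop of at most \<open>\<alpha> K'\<close> in the expectation term.\<close>
lemma grid_min_from_window_min:
  fixes f \<Phi> :: "real \<Rightarrow> real"
  assumes "\<theta> > 0" "0 < \<alpha>" and cv: "convex_on UNIV f" and fmin: "\<forall>x. f cm \<le> f x"
    and flat: "\<And>m. zg \<theta> m < zg \<theta> i \<Longrightarrow> \<Phi> (zg \<theta> m) = \<Phi> (zg \<theta> i)"
    and mono: "\<And>a b. b \<le> a \<Longrightarrow> \<Phi> (zg \<theta> b) \<le> \<Phi> (zg \<theta> a) + K'" and "\<alpha> * K' \<le> K"
    and i: "zg \<theta> i < cm" and n: "zg \<theta> n < cm" "cm \<le> zg \<theta> (n + 1)"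
    and U: "cm \<le> U" "f (zg \<theta> n) + K < f U"
    and window: "\<And>m. zg \<theta> i \<le> zg \<theta> m \<Longrightarrow> zg \<theta> m \<le> U \<Longrightarrow> H S \<le> H (zg \<theta> m)"
    and H: "\<And>y. H y = f y + \<alpha> * \<Phi> y"
  shows "H S \<le> H (zg \<theta> m)"
proof -
  have "i < n + 1" using i n zg_less_iff[OF assms(1)] by fastforce
  then have n_window: "zg \<theta> i \<le> zg \<theta> n" "zg \<theta> n \<le> U"
    using zg_le_iff[OF assms(1)] n U by auto
  consider "zg \<theta> m < zg \<theta> i" | "zg \<theta> i \<le> zg \<theta> m" "zg \<theta> m \<le> U" | "U < zg \<theta> m"
    by linarith
  then show ?thesis
  proof cases
    case 1
    have "f (zg \<theta> i) \<le> f (zg \<theta> m)"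
      using convex_antimono_left_of_min[OF cv fmin] 1 i by simp
    then have "H (zg \<theta> i) \<le> H (zg \<theta> m)" using flat[OF 1] H by simp
    then show ?thesis using window[of i] i U(1) by simp
  next
    case 2
    then show ?thesis by (rule window)
  next
    case 3
    have "f U \<le> f (zg \<theta> m)"
      using convex_mono_right_of_min[OF cv fmin] 3 U(1) by simp
    have "n \<le> m" using n_window 3 zg_le_iff[OF assms(1)] by fastforce
    then have "\<alpha> * \<Phi> (zg \<theta> n) \<le> \<alpha> * \<Phi> (zg \<theta> m) + \<alpha> * K'"
      using mono mult_left_mono[of _ _ \<alpha>] assms(2) by (fastforce simp: distrib_left)
    then have "H (zg \<theta> n) \<le> H (zg \<theta> m)"
      using \<open>f U \<le> f (zg \<theta> m)\<close> U(2) \<open>\<alpha> * K' \<le> K\<close> H by simp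
    then show ?thesis using window[OF n_window] by simp
  qed
qed

lemma sS_invariant_last:
  assumes cv: "convex_on UNIV (C (T - 1))" and co: "filterlim (C (T - 1)) at_top at_infinity"
    and K0: "0 \<le> K (T - 1)"
  shows "sS_invariant \<theta> (C (T - 1)) (Cmin C (T - 1)) (sLast C K T) (K (T - 1)) (sLast C K T)"
proof -
  let ?f = "C (T - 1)" and ?m = "Cmin C (T - 1)"
  note s = sLast_props[where C=C and T=T and K=K, OF cv co K0]
    and minimiser = Cmin_least_minimiser(1)[where C=C and t="T - 1", OF cv co]
  have "?f y \<le> ?f ?m + K (T - 1)" if "sLast C K T \<le> y" "y \<le> ?m" for y
    using convex_on_le_max[of "sLast C K T" ?m ?f y] convex_on_subset[OF cv] that s K0 by auto
  then show ?thesis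
    unfolding sS_invariant_def using s minimiser K0 below_K_chord_if_convex[OF cv K0] by auto
qed

lemma sS_invariant_step:
  fixes C :: "nat \<Rightarrow> real \<Rightarrow> real"
  assumes \<theta>: "\<theta> > 0" and \<alpha>: "0 < \<alpha>"
    and cv: "convex_on UNIV (C t)" and co: "filterlim (C t) at_top at_infinity"
    and K: "0 \<le> K t" "\<alpha> * K' \<le> K t"
    and inv: "sS_invariant \<theta> H' S' s' K' lo'"
    and w: "\<And>j. 0 \<le> w j" "summable w" "suminf w \<le> 1"
    and V_summable: "\<And>y. summable (\<lambda>j. \<bar>Vof H' S' s' K' (y - zg \<theta> (int j - 1)) * w j\<bar>)"
    and H: "H = (\<lambda>y. C t y + \<alpha> * grid_expectation \<theta> (Vof H' S' s' K') w y)"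
    and I: "I = Inext C \<theta> t lo'" and Ib: "Ib = Ibarnext C K \<theta> t I"
    and S: "S = Sgrid \<theta> H I (SU C K \<theta> t)" and s: "s = sgrid \<theta> (K t) H S Ib"
  shows "sS_invariant \<theta> H S s (K t) Ib"
proof -
  let ?\<Phi> = "grid_expectation \<theta> (Vof H' S' s' K') w"
  have K': "0 \<le> K'" using inv by (simp add: sS_invariant_def)
  obtain i where Ii: "I = zg \<theta> i" and I_lt: "I < lo' - \<theta>" "I < Cmin C t"
    using Inext_grid[OF \<theta>] I by metis
  obtain u where U: "SU C K \<theta> t = zg \<theta> u" "Cmin C t \<le> zg \<theta> u"
    "C t (zg \<theta> (n0 C \<theta> t)) + K t < C t (zg \<theta> u)"
    using SU_grid[where C=C and t=t and K=K, OF \<theta> co] by metis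
  obtain k where Sk: "S = zg \<theta> k" "I \<le> S"
    and window: "\<And>m. I \<le> zg \<theta> m \<Longrightarrow> zg \<theta> m \<le> SU C K \<theta> t \<Longrightarrow> H S \<le> H (zg \<theta> m)"
    using Sgrid_minimises_window[OF \<theta>, of I i "SU C K \<theta> t" H] Ii I_lt U S by auto
  have chord: "below_K_chord H (K t) x y (zg \<theta> m)" if "x \<le> y" "y \<le> zg \<theta> m" for x y m
    unfolding H
    by (rule below_K_chord_convex_add[OF cv _ that \<alpha> K(2)],
        rule grid_expectation_below_K_chord[OF w V_summable K' Vof_below_K_chord[OF inv] that])
  have flat: "?\<Phi> (zg \<theta> m) = ?\<Phi> (zg \<theta> i)" if "zg \<theta> m < zg \<theta> i" for m
    using that Ii I_lt by (intro grid_expectation_eq_if_flat[OF Vof_below[OF inv] \<theta>]) auto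
  have mono: "?\<Phi> (zg \<theta> b) \<le> ?\<Phi> (zg \<theta> a) + K'" if "b \<le> a" for a b
    by (rule grid_expectation_grid_mono[OF w V_summable Vof_grid_mono[OF inv \<theta>] K' that])
  have min: "H S \<le> H (zg \<theta> m)" for m
  proof -
    note fmin = Cmin_least_minimiser(1)[where C=C and t=t, OF cv co]
    show ?thesis
      by (rule grid_min_from_window_min[where f="C t" and \<Phi>="?\<Phi>" and H=H,
            OF \<theta> \<alpha> cv fmin flat mono K(2)])
         (use Ii I_lt U n0_bracket[OF \<theta>] window H in auto)
  qed
  have "Ib \<le> I" using Ibarnext_le[where C=C and t=t and K=K, OF \<theta> co K(1)] Ib Ii by simp
  then have s_bounds: "Ib \<le> s" "s \<le> S" "H s \<le> H S + K t"
    using sgrid_bounds[OF \<theta> K(1), of Ib k H] Sk s by auto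
  have "H y \<le> H S + K t" if "s \<le> y" "y \<le> S" for y
    using below_K_chord_bound[OF chord[of s y k]] that s_bounds Sk by simp
  then show ?thesis
    unfolding sS_invariant_def using K(1) s_bounds min chord by blast
qed

lemma fmass_subprobability:
  assumes "prob_space (D t)" "sets (D t) = sets borel" "\<theta> > 0"
  shows "\<And>j. 0 \<le> fmass \<theta> D t (int j - 1)" "summable (\<lambda>j. fmass \<theta> D t (int j - 1))"
    "(\<Sum>j. fmass \<theta> D t (int j - 1)) \<le> 1"
proof -
  interpret prob_space "D t" by (rule assms(1))
  define F where "F = (\<lambda>n::nat. Fdist D t (zg \<theta> (int n - 1)))"
  have telescope: "fmass \<theta> D t (int j - 1) = F (Suc j) - F j" for j
    by (simp add: fmass_def F_def)
  have "mono F"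
    unfolding mono_iff_le_Suc F_def Fdist_def
    using assms(2,3) by (intro allI finite_measure_mono) (auto simp: zg_def)
  then show nonneg: "0 \<le> fmass \<theta> D t (int j - 1)" for j
    unfolding telescope by (simp add: mono_iff_le_Suc)
  have partial: "(\<Sum>j<n. fmass \<theta> D t (int j - 1)) \<le> 1" for n
  proof -
    have "(\<Sum>j<n. fmass \<theta> D t (int j - 1)) = F n - F 0"
      unfolding telescope by (rule sum_lessThan_telescope)
    also have "\<dots> \<le> 1"
      using prob_le_1[of "{..zg \<theta> (int n - 1)}"] measure_nonneg[of "D t" "{..zg \<theta> (int 0 - 1)}"]
      unfolding F_def Fdist_def by linarith
    finally show ?thesis .
  qed
  show "summable (\<lambda>j. fmass \<theta> D t (int j - 1))"
    by (rule summableI_nonneg_bounded[OF nonneg partial])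
  then show "(\<Sum>j. fmass \<theta> D t (int j - 1)) \<le> 1"
    using suminf_le_const partial by blast
qed

lemma stage_last:
  assumes "1 \<le> T"
  shows "Hf C K \<theta> T \<alpha> D (T - 1) = C (T - 1)" "Sf C K \<theta> T \<alpha> D (T - 1) = Cmin C (T - 1)"
    "sf C K \<theta> T \<alpha> D (T - 1) = sLast C K T" "Ibar C K \<theta> T (T - 1) = sLast C K T"
  by (simp_all add: Hf_def Sf_def sf_def Ibar_def)

lemma stage_step:
  assumes "t + 2 \<le> T"
  shows "Hf C K \<theta> T \<alpha> D t =
      (\<lambda>y. C t y + \<alpha> * grid_expectation \<theta> (Vf C K \<theta> T \<alpha> D (Suc t)) (\<lambda>j. fmass \<theta> D t (int j - 1)) y)"
    "Sf C K \<theta> T \<alpha> D t = Sgrid \<theta> (Hf C K \<theta> T \<alpha> D t) (Ival C K \<theta> T t) (SU C K \<theta> t)"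
    "sf C K \<theta> T \<alpha> D t = sgrid \<theta> (K t) (Hf C K \<theta> T \<alpha> D t) (Sf C K \<theta> T \<alpha> D t) (Ibar C K \<theta> T t)"
    "Ibar C K \<theta> T t = Ibarnext C K \<theta> t (Ival C K \<theta> T t)"
proof -
  define k where "k = T - 2 - t"
  have idx: "T - 1 - t = Suc k" "T - 2 - k = t" "T - 1 - Suc t = k"
    "T - Suc t = Suc k" "T - Suc (Suc t) = k" "T - Suc (Suc k) = t"
    using assms by (auto simp: k_def)
  obtain H' S' s' where st: "stage C K \<theta> T \<alpha> D k = (H', S', s')" by (metis prod_cases3)
  have "Vf C K \<theta> T \<alpha> D (Suc t) = Vof H' S' s' (K (Suc t))"
    by (simp add: Vf_def Hf_def Sf_def sf_def idx st)
  then show "Hf C K \<theta> T \<alpha> D t =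
      (\<lambda>y. C t y + \<alpha> * grid_expectation \<theta> (Vf C K \<theta> T \<alpha> D (Suc t)) (\<lambda>j. fmass \<theta> D t (int j - 1)) y)"
    "Sf C K \<theta> T \<alpha> D t = Sgrid \<theta> (Hf C K \<theta> T \<alpha> D t) (Ival C K \<theta> T t) (SU C K \<theta> t)"
    "sf C K \<theta> T \<alpha> D t = sgrid \<theta> (K t) (Hf C K \<theta> T \<alpha> D t) (Sf C K \<theta> T \<alpha> D t) (Ibar C K \<theta> T t)"
    "Ibar C K \<theta> T t = Ibarnext C K \<theta> t (Ival C K \<theta> T t)"
    by (simp_all add: Hf_def Sf_def sf_def Ibar_def Ival_def grid_expectation_def idx st Let_def)
qed

lemma sS_invariant_stages:
  fixes C :: "nat \<Rightarrow> real \<Rightarrow> real"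
  assumes \<alpha>: "0 < \<alpha>" and \<theta>: "\<theta> > 0"
    and K_nonneg: "\<forall>t<T. 0 \<le> K t" and K_dec: "\<forall>t. t + 2 \<le> T \<longrightarrow> \<alpha> * K (Suc t) \<le> K t"
    and demand: "\<forall>t<T. prob_space (D t) \<and> sets (D t) = sets borel"
    and C: "\<forall>t<T. convex_on UNIV (C t) \<and> filterlim (C t) at_top at_infinity"
    and V_summable: "\<forall>t. t + 2 \<le> T \<longrightarrow> (\<forall>y. summable (\<lambda>j.
          \<bar>Vf C K \<theta> T \<alpha> D (Suc t) (y - zg \<theta> (int j - 1)) * fmass \<theta> D t (int j - 1)\<bar>))"
    and "t < T"
  shows "sS_invariant \<theta> (Hf C K \<theta> T \<alpha> D t) (Sf C K \<theta> T \<alpha> D t) (sf C K \<theta> T \<alpha> D t) (K t)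
           (Ibar C K \<theta> T t)"
  using \<open>t < T\<close>
proof (induction "T - 1 - t" arbitrary: t)
  case 0
  then have t: "t = T - 1" and "1 \<le> T" by simp_all
  show ?case
    unfolding t stage_last[OF \<open>1 \<le> T\<close>]
    by (rule sS_invariant_last) (use C K_nonneg 0 in \<open>auto simp: t\<close>)
next
  case (Suc k)
  then have t2: "t + 2 \<le> T" by simp
  have IH: "sS_invariant \<theta> (Hf C K \<theta> T \<alpha> D (Suc t)) (Sf C K \<theta> T \<alpha> D (Suc t)) (sf C K \<theta> T \<alpha> D (Suc t))
      (K (Suc t)) (Ibar C K \<theta> T (Suc t))"
    using Suc.hyps(1)[of "Suc t"] Suc.hyps(2) t2 by simp
  have cv: "convex_on UNIV (C t)" and co: "filterlim (C t) at_top at_infinity"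
    and K: "0 \<le> K t" "\<alpha> * K (Suc t) \<le> K t"
    using C K_nonneg K_dec t2 by auto
  have w: "\<And>j. 0 \<le> fmass \<theta> D t (int j - 1)" "summable (\<lambda>j. fmass \<theta> D t (int j - 1))"
    "(\<Sum>j. fmass \<theta> D t (int j - 1)) \<le> 1"
    using fmass_subprobability[of D t \<theta>] demand \<theta> t2 by auto
  have V: "summable (\<lambda>j. \<bar>Vof (Hf C K \<theta> T \<alpha> D (Suc t)) (Sf C K \<theta> T \<alpha> D (Suc t))
      (sf C K \<theta> T \<alpha> D (Suc t)) (K (Suc t)) (y - zg \<theta> (int j - 1)) * fmass \<theta> D t (int j - 1)\<bar>)" for y
    using V_summable t2 by (simp add: Vf_def)
  have H: "Hf C K \<theta> T \<alpha> D t = (\<lambda>y. C t y + \<alpha> * grid_expectation \<theta>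
      (Vof (Hf C K \<theta> T \<alpha> D (Suc t)) (Sf C K \<theta> T \<alpha> D (Suc t)) (sf C K \<theta> T \<alpha> D (Suc t)) (K (Suc t)))
      (\<lambda>j. fmass \<theta> D t (int j - 1)) y)"
    using stage_step(1)[OF t2] by (simp add: Vf_def)
  show ?case
    using stage_step(2-4)[OF t2]
    by (intro sS_invariant_step[where C=C and t=t and K=K, OF \<theta> \<alpha> cv co K IH w V H Ival_def])
       simp_all
qed

theorem theorem3p1:
  fixes T :: nat and \<alpha> \<theta> :: real
    and c K :: "nat \<Rightarrow> real" and G :: "nat \<Rightarrow> real \<Rightarrow> real"
    and D :: "nat \<Rightarrow> real measure"
  assumes T2: "T \<ge> 2"
    and alpha: "0 < \<alpha>" "\<alpha> \<le> 1"
    and theta: "\<theta> > 0"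
    and Kpos: "\<forall>t<T. K t \<ge> 0"
    and Kdec: "\<forall>t. t + 2 \<le> T \<longrightarrow> K t \<ge> \<alpha> * K (Suc t)"
    and demand: "\<forall>t<T. prob_space (D t) \<and> sets (D t) = sets borel \<and>
                   (AE x in D t. 0 \<le> x) \<and> integrable (D t) (\<lambda>x. x)"
    and Cconv: "\<forall>t<T. convex_on UNIV (Ccost \<alpha> c G D t) \<and>
                   filterlim (Ccost \<alpha> c G D t) at_top at_infinity"
    and finite_exp: "\<forall>t. t + 2 \<le> T \<longrightarrow> (\<forall>y. summable (\<lambda>j.
                   \<bar>Vf (Ccost \<alpha> c G D) K \<theta> T \<alpha> D (Suc t) (y - zg \<theta> (int j - 1))
                     * fmass \<theta> D t (int j - 1)\<bar>))"
  shows "\<forall>t<T.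
           subKconvex \<theta> (K t) (Hf (Ccost \<alpha> c G D) K \<theta> T \<alpha> D t) \<and>
           subKconvex \<theta> (K t) (Vf (Ccost \<alpha> c G D) K \<theta> T \<alpha> D t) \<and>
           (\<forall>j::int. Hf (Ccost \<alpha> c G D) K \<theta> T \<alpha> D t (Sf (Ccost \<alpha> c G D) K \<theta> T \<alpha> D t)
                      \<le> Hf (Ccost \<alpha> c G D) K \<theta> T \<alpha> D t (zg \<theta> j))"
proof (intro allI impI conjI)
  fix t assume "t < T"
  let ?C = "Ccost \<alpha> c G D"
  have inv: "sS_invariant \<theta> (Hf ?C K \<theta> T \<alpha> D t) (Sf ?C K \<theta> T \<alpha> D t) (sf ?C K \<theta> T \<alpha> D t) (K t)
      (Ibar ?C K \<theta> T t)"
    by (rule sS_invariant_stages[OF alpha(1) theta Kpos _ _ Cconv finite_exp \<open>t < T\<close>])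
       (use Kdec demand in auto)
  then show "subKconvex \<theta> (K t) (Hf ?C K \<theta> T \<alpha> D t)"
    by (intro subKconvexI_below_K_chord) (auto simp: sS_invariant_def)
  show "subKconvex \<theta> (K t) (Vf ?C K \<theta> T \<alpha> D t)"
    unfolding Vf_def using inv
    by (intro subKconvexI_below_K_chord Vof_below_K_chord) (auto simp: sS_invariant_def)
  show "Hf ?C K \<theta> T \<alpha> D t (Sf ?C K \<theta> T \<alpha> D t) \<le> Hf ?C K \<theta> T \<alpha> D t (zg \<theta> j)" for j
    using inv by (simp add: sS_invariant_def)
qed

end
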